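(* Let $p(X_1,\dots,X_n)$ be a regular $\{\circ,\wedge\}$-term, let $V=\{y_1,\dots,y_m\}$ be the set of vertices of $\mathbf{G}(p)$, and for each $i\in\{1,\dots,n\}$ let $T_i(p)$ be the set of pairs $(y_a,y_b)$ such that $(y_a,y_b)$ is an edge of $\mathbf{G}(p)$ labelled $X_i$. Then for every $i$, every class of the equivalence relation on $V$ generated by $T_i(p)$ has at most $2$ elements.
   Context: Graph of a $\{\wedge,\circ\}$-term $p$: start with vertices $y_1,y_2$ and one edge $(y_1,y_2)$ labelled $p$; repeatedly pick an edge $(y_j,y_k)$ whose label $w$ is not a variable; if $w=u\wedge v$ replace it by two edges $(y_j,y_k)$ labelled $u$ and $v$; if $w=u\circ v$ add a new vertex $y_t$ and replace the edge by $(y_j,y_t)$ labelled $u$ and $(y_t,y_k)$ labelled $v$. Stop when all labels are variables; the result is $\mathbf{G}(p)$. For a $\{\circ,\wedge\}$-term $p$, the sets $L_p,R_p$ of left/right variables are defined by: $L_{X}=R_X=\{X\}$ for a variable; $L_{q\circ r}=L_q$, $R_{q\circ r}=R_r$; $L_{q\wedge r}=L_q\cup L_r$, $R_{q\wedge r}=R_q\cup R_r$. Regular terms form the smallest class of $\{\circ,\wedge\}$-terms containing all variables, containing $q\circ r$ whenever $q,r$ are regular and $R_q\cap L_r=\emptyset$, and containing $q\wedge r$ whenever $q,r$ are regular, $L_q\cap L_r=\emptyset$ and $R_q\cap R_r=\emptyset$. *)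

theory Defs
  imports Main
begin

datatype 'v trm = Var 'v | Comp "'v trm" "'v trm" | Meet "'v trm" "'v trm"

fun Lv :: "'v trm \<Rightarrow> 'v set" where
  "Lv (Var x) = {x}"
| "Lv (Comp q r) = Lv q"
| "Lv (Meet q r) = Lv q \<union> Lv r"

fun Rv :: "'v trm \<Rightarrow> 'v set" where
  "Rv (Var x) = {x}"
| "Rv (Comp q r) = Rv r"
| "Rv (Meet q r) = Rv q \<union> Rv r"

inductive regular :: "'v trm \<Rightarrow> bool" where
  reg_var: "regular (Var x)"
| reg_comp: "regular q \<Longrightarrow> regular r \<Longrightarrow> Rv q \<inter> Lv r = {} \<Longrightarrow> regular (Comp q r)"
| reg_meet: "regular q \<Longrightarrow> regular r \<Longrightarrow> Lv q \<inter> Lv r = {} \<Longrightarrow> Rv q \<inter> Rv r = {}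
     \<Longrightarrow> regular (Meet q r)"

text \<open>Vertices of the graph G(p): the two initial vertices y1 (Src), y2 (Tgt), and one fresh
  vertex for each occurrence of \<circ> in p, named by the position of that occurrence.\<close>
datatype vert = Src | Tgt | Mid "bool list"

fun gedges :: "'v trm \<Rightarrow> vert \<Rightarrow> vert \<Rightarrow> bool list \<Rightarrow> (vert \<times> 'v \<times> vert) set" where
  "gedges (Var x) a b pos = {(a, x, b)}"
| "gedges (Meet q r) a b pos = gedges q a b (pos @ [False]) \<union> gedges r a b (pos @ [True])"
| "gedges (Comp q r) a b pos =
     gedges q a (Mid pos) (pos @ [False]) \<union> gedges r (Mid pos) b (pos @ [True])"

fun gverts :: "'v trm \<Rightarrow> bool list \<Rightarrow> vert set" where
  "gverts (Var x) pos = {}"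
| "gverts (Meet q r) pos = gverts q (pos @ [False]) \<union> gverts r (pos @ [True])"
| "gverts (Comp q r) pos = insert (Mid pos) (gverts q (pos @ [False]) \<union> gverts r (pos @ [True]))"

definition G_edges :: "'v trm \<Rightarrow> (vert \<times> 'v \<times> vert) set" where
  "G_edges p = gedges p Src Tgt []"

definition G_verts :: "'v trm \<Rightarrow> vert set" where
  "G_verts p = {Src, Tgt} \<union> gverts p []"

definition T_rel :: "'v trm \<Rightarrow> 'v \<Rightarrow> vert rel" where
  "T_rel p X = {(a, b). (a, X, b) \<in> G_edges p}"

definition equiv_gen :: "'a set \<Rightarrow> 'a rel \<Rightarrow> 'a rel" where
  "equiv_gen V T = (Id_on V \<union> T \<union> T\<inverse>)\<^sup>+"

end

theory Submission
  imports Defs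
begin

text \<open>The edges of \<open>G(p)\<close> labelled \<open>X\<close> form a matching: every vertex lies on at
  most one of them, i.e. \<open>T \<union> T\<inverse>\<close> is single-valued. The graphs of the two immediate subterms share only boundary
  vertices (the middle vertex for \<open>q \<circ> r\<close>, the two ends for \<open>q \<and> r\<close>), and an
  \<open>X\<close>-edge of each at a shared vertex would put \<open>X\<close> into \<open>R\<^sub>q \<inter> L\<^sub>r\<close>,
  \<open>L\<^sub>q \<inter> L\<^sub>r\<close> or \<open>R\<^sub>q \<inter> R\<^sub>r\<close>. Along a matching, the generated equivalence
  never leaves an edge, so its classes have at most two elements.\<close>

lemma single_valued_sym_trancl_subset:
  assumes "single_valued (T \<union> T\<inverse>)"
  shows "(Id_on V \<union> T \<union> T\<inverse>)\<^sup>+ \<subseteq> Id \<union> T \<union> T\<inverse>"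
proof (rule subrelI)
  fix v w assume "(v, w) \<in> (Id_on V \<union> T \<union> T\<inverse>)\<^sup>+"
  then show "(v, w) \<in> Id \<union> T \<union> T\<inverse>"
  proof (induction rule: trancl_induct)
    case (step y z)
    show ?case
    proof (cases "y = v \<or> z = y")
      case False
      then have "(y, v) \<in> T \<union> T\<inverse>" "(y, z) \<in> T \<union> T\<inverse>"
        using step by auto
      then have "z = v" using single_valuedD[OF assms] by blast
      then show ?thesis by simp
    qed (use step in auto)
  qed auto
qed

lemma card_equiv_gen_class_le_2:
  assumes "single_valued (T \<union> T\<inverse>)" and "C \<in> V // equiv_gen V T"
  shows "card C \<le> 2"
proof -
  obtain v where C: "C = equiv_gen V T `` {v}"
    using assms(2) by (auto elim: quotientE)
  obtain w where w: "(T \<union> T\<inverse>) `` {v} \<subseteq> {w}"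
    using single_valuedD[OF assms(1)] by blast
  have "C \<subseteq> {v, w}"
    using single_valued_sym_trancl_subset[OF assms(1)] w
    unfolding C equiv_gen_def by blast
  then have "card C \<le> card {v, w}" by (intro card_mono) auto
  also have "\<dots> \<le> 2" by (simp add: card_insert_le_m1)
  finally show ?thesis .
qed

lemma single_valued_sym_Un:
  assumes "single_valued (A \<union> A\<inverse>)" "single_valued (B \<union> B\<inverse>)" "Field A \<inter> Field B = {}"
  shows "single_valued ((A \<union> B) \<union> (A \<union> B)\<inverse>)"
  using assms unfolding single_valued_def Field_def by blast

definition edges_labelled :: "'l \<Rightarrow> ('a \<times> 'l \<times> 'a) set \<Rightarrow> 'a rel" where
  "edges_labelled X E = {(x, y). (x, X, y) \<in> E}"

lemma edges_labelled_Un [simp]: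
  "edges_labelled X (E \<union> F) = edges_labelled X E \<union> edges_labelled X F"
  by (auto simp: edges_labelled_def)

lemma Field_edges_labelled:
  "v \<in> Field (edges_labelled X E) \<longleftrightarrow> (\<exists>x y. (x, X, y) \<in> E \<and> v \<in> {x, y})"
  by (auto simp: edges_labelled_def Field_def)

definition inner_verts :: "bool list \<Rightarrow> vert set" where
  "inner_verts pos = range (\<lambda>s. Mid (pos @ s))"

lemma Mid_in_inner_verts [simp]: "Mid pos \<in> inner_verts pos"
  by (auto simp: inner_verts_def intro: range_eqI[of _ _ "[]"])

lemma Mid_notin_inner_verts_snoc [simp]: "Mid pos \<notin> inner_verts (pos @ [z])"
  by (auto simp: inner_verts_def)

lemma inner_verts_snoc_subset: "inner_verts (pos @ [z]) \<subseteq> inner_verts pos"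
  by (auto simp: inner_verts_def intro: range_eqI[of _ _ "z # _"])

lemma notin_inner_verts_snoc [simp]: "v \<notin> inner_verts pos \<Longrightarrow> v \<notin> inner_verts (pos @ [z])"
  using inner_verts_snoc_subset by blast

lemma inner_verts_snoc_disjoint: "inner_verts (pos @ [False]) \<inter> inner_verts (pos @ [True]) = {}"
  by (auto simp: inner_verts_def)

lemma gedges_endpoints:
  "(x, l, y) \<in> gedges q a b pos \<Longrightarrow> x \<in> insert a (inner_verts pos) \<and> y \<in> insert b (inner_verts pos)"
  by (induction q arbitrary: a b pos)
    (use inner_verts_snoc_subset in fastforce)+

lemma gedges_at_source:
  "(x, l, y) \<in> gedges q a b pos \<Longrightarrow> a \<in> {x, y} \<Longrightarrow> a \<noteq> b \<Longrightarrow> a \<notin> inner_verts pos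
    \<Longrightarrow> l \<in> Lv q"
proof (induction q arbitrary: a b pos x y)
  case (Comp q r)
  have "(x, l, y) \<notin> gedges r (Mid pos) b (pos @ [True])"
    using Comp.prems gedges_endpoints[of x l y r] inner_verts_snoc_subset by fastforce
  moreover have "a \<noteq> Mid pos" using Comp.prems by auto
  ultimately show ?case using Comp by auto
next
  case (Meet q r)
  have "a \<notin> inner_verts (pos @ [False])" "a \<notin> inner_verts (pos @ [True])"
    using Meet.prems by simp_all
  then show ?case
    using Meet.IH(1)[OF _ Meet.prems(2,3)] Meet.IH(2)[OF _ Meet.prems(2,3)] Meet.prems(1) by auto
qed auto

lemma gedges_at_target:
  "(x, l, y) \<in> gedges q a b pos \<Longrightarrow> b \<in> {x, y} \<Longrightarrow> a \<noteq> b \<Longrightarrow> b \<notin> inner_verts pos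
    \<Longrightarrow> l \<in> Rv q"
proof (induction q arbitrary: a b pos x y)
  case (Comp q r)
  have "(x, l, y) \<notin> gedges q a (Mid pos) (pos @ [False])"
    using Comp.prems gedges_endpoints[of x l y q] inner_verts_snoc_subset by fastforce
  moreover have "b \<noteq> Mid pos" using Comp.prems by auto
  ultimately show ?case using Comp by auto
next
  case (Meet q r)
  have "b \<notin> inner_verts (pos @ [False])" "b \<notin> inner_verts (pos @ [True])"
    using Meet.prems by simp_all
  then show ?case
    using Meet.IH(1)[OF _ Meet.prems(2,3)] Meet.IH(2)[OF _ Meet.prems(2,3)] Meet.prems(1) by auto
qed auto

lemma single_valued_edges_labelled_gedges:
  fixes X :: 'l
  assumes "regular q" "a \<noteq> b" "a \<notin> inner_verts pos" "b \<notin> inner_verts pos"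
  defines "S E \<equiv> edges_labelled X E \<union> (edges_labelled X E)\<inverse>"
  shows "single_valued (S (gedges q a b pos))"
  using assms(1-4)
proof (induction q arbitrary: a b pos rule: regular.induct)
  case (reg_var x)
  then show ?case
    by (auto simp: S_def edges_labelled_def single_valued_def)
next
  case (reg_comp q r)
  have "a \<noteq> Mid pos" "Mid pos \<noteq> b" using reg_comp.prems by auto
  let ?A = "edges_labelled X (gedges q a (Mid pos) (pos @ [False]))"
  let ?B = "edges_labelled X (gedges r (Mid pos) b (pos @ [True]))"
  have "Field ?A \<inter> Field ?B = {}"
  proof (rule ccontr)
    assume "Field ?A \<inter> Field ?B \<noteq> {}"
    then obtain v where "v \<in> Field ?A" "v \<in> Field ?B" by blast
    then obtain x y x' y' where
      e: "(x, X, y) \<in> gedges q a (Mid pos) (pos @ [False])" "v \<in> {x, y}"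
      and e': "(x', X, y') \<in> gedges r (Mid pos) b (pos @ [True])" "v \<in> {x', y'}"
      unfolding Field_edges_labelled by blast
    have "v = Mid pos"
      using gedges_endpoints[OF e(1)] gedges_endpoints[OF e'(1)] e(2) e'(2) reg_comp.prems
        inner_verts_snoc_disjoint inner_verts_snoc_subset by blast
    then have "X \<in> Rv q" "X \<in> Lv r"
      using gedges_at_target[OF e(1)] gedges_at_source[OF e'(1)] e(2) e'(2)
        \<open>a \<noteq> Mid pos\<close> \<open>Mid pos \<noteq> b\<close>
      by auto
    then show False using reg_comp.hyps(3) by blast
  qed
  moreover have "single_valued (?A \<union> ?A\<inverse>)"
    using reg_comp.IH(1)[of a "Mid pos" "pos @ [False]"] reg_comp.prems \<open>a \<noteq> Mid pos\<close>
    unfolding S_def by simp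
  moreover have "single_valued (?B \<union> ?B\<inverse>)"
    using reg_comp.IH(2)[of "Mid pos" b "pos @ [True]"] reg_comp.prems \<open>Mid pos \<noteq> b\<close>
    unfolding S_def by simp
  ultimately show ?case
    unfolding S_def by (simp add: single_valued_sym_Un)
next
  case (reg_meet q r)
  let ?A = "edges_labelled X (gedges q a b (pos @ [False]))"
  let ?B = "edges_labelled X (gedges r a b (pos @ [True]))"
  have "Field ?A \<inter> Field ?B = {}"
  proof (rule ccontr)
    assume "Field ?A \<inter> Field ?B \<noteq> {}"
    then obtain v where "v \<in> Field ?A" "v \<in> Field ?B" by blast
    then obtain x y x' y' where
      e: "(x, X, y) \<in> gedges q a b (pos @ [False])" "v \<in> {x, y}"
      and e': "(x', X, y') \<in> gedges r a b (pos @ [True])" "v \<in> {x', y'}"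
      unfolding Field_edges_labelled by blast
    have "v = a \<or> v = b"
      using gedges_endpoints[OF e(1)] gedges_endpoints[OF e'(1)] e(2) e'(2)
        inner_verts_snoc_disjoint by blast
    then have "X \<in> Lv q \<inter> Lv r \<or> X \<in> Rv q \<inter> Rv r"
      using gedges_at_source[OF e(1)] gedges_at_source[OF e'(1)] gedges_at_target[OF e(1)]
        gedges_at_target[OF e'(1)] e(2) e'(2) reg_meet.prems by auto
    then show False using reg_meet.hyps(3,4) by blast
  qed
  moreover have "single_valued (?A \<union> ?A\<inverse>)" "single_valued (?B \<union> ?B\<inverse>)"
    using reg_meet.IH(1)[of a b "pos @ [False]"] reg_meet.IH(2)[of a b "pos @ [True]"]
      reg_meet.prems
    unfolding S_def by simp_all
  ultimately show ?case
    unfolding S_def by (simp add: single_valued_sym_Un)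
qed

theorem lemma4p3:
  fixes p :: "'v trm" and X :: 'v
  assumes "regular p"
  shows "\<forall>C \<in> G_verts p // equiv_gen (G_verts p) (T_rel p X). card C \<le> 2"
proof -
  have "T_rel p X = edges_labelled X (G_edges p)"
    by (simp add: T_rel_def edges_labelled_def)
  moreover have "single_valued (edges_labelled X (G_edges p) \<union> (edges_labelled X (G_edges p))\<inverse>)"
    unfolding G_edges_def
    by (rule single_valued_edges_labelled_gedges[OF assms]) (auto simp: inner_verts_def)
  ultimately show ?thesis
    using card_equiv_gen_class_le_2 by metis
qed

end
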